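(* Assume that $\hat F$ is differentiable on $\mathcal F$ and $\|\hat F'(y)-\hat F'(x)\|_F\le L_{\hat F}\|y-x\|$ for all $x,y\in\mathcal F$ (Assumption 1). Let $\{x_k\}$ be generated by Scheme 1 with $\tau_k=\hat f_1(x_k)$ and $\varepsilon_k=\varepsilon\ge 0$ for all $k$. Then for every $k\in\mathbb N$ and every $r>0$: $$\frac{8L_{\hat F}^2}{L}\Big(\varepsilon+\frac{\hat f_1(x_0)-\hat f_1(x_k)}{k}\Big)\ \ge\ \min_{i\in\{0,\dots,k-1\}}\Big\|2L_{\hat F}\big(T_{2L_{\hat F},\hat f_1(x_i)}(x_i)-x_i\big)\Big\|^2,$$ $$L_{\hat F}\Big(\varepsilon+\frac{\hat f_1(x_0)-\hat f_1(x_k)}{k}\Big)\ \ge\ \min_{i\in\{0,\dots,k-1\}} 2(L_{\hat F}r)^2\,\varkappa\!\Big(\frac{\Delta_r(x_i)}{4\hat f_1(x_i)L_{\hat F}r^2}\Big),$$ where $\varkappa(t)=\frac{t^2}{2}$ for $t\in[0,1]$ and $\varkappa(t)=t-\frac12$ for $t>1$.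
   Context: Let $F:\mathbb R^n\to\mathbb R^m$ be a smooth map, $\hat F(x)=\frac{1}{\sqrt m}F(x)$ with Jacobian $\hat F'(x)\in\mathbb R^{m\times n}$. All vector norms are Euclidean, $\|\cdot\|$ on matrices is the spectral norm, $\|\cdot\|_F$ the Frobenius norm. Set $\hat f_1(x)=\|\hat F(x)\|$, $\hat f_2=\hat f_1^2$, $\phi(x,y)=\|\hat F(x)+\hat F'(x)(y-x)\|$, and for $L>0,\tau>0$ the local model $\psi_{x,L,\tau}(y)=\frac{\tau}{2}+\frac{\phi(x,y)^2}{2\tau}+\frac L2\|y-x\|^2$, with $T_{L,\tau}(x)=\arg\min_{y\in\mathbb R^n}\psi_{x,L,\tau}(y)$. For $r>0$, $\Delta_r(x)=\hat f_2(x)-\min_y\{\phi(x,y)^2:\|y-x\|\le r\}$. $\mathcal F\subseteq\mathbb R^n$ is a closed convex set with nonempty interior; level sets are $\mathcal L(v)=\{x:\hat f_1(x)\le v\}$; it is assumed throughout that $\mathcal L(\hat f_1(x_0))\subseteq\mathcal F$ and that $\mathcal F$ is large enough that the whole generated sequence (with nonincreasing $\hat f_1$ values) lies in $\mathcal F$. Scheme 1 (input: $x_0$ with $\mathcal L(\hat f_1(x_0))\subseteq\mathcal F$; a rule choosing $\varepsilon_k\ge0$ and $\tau_k>0$; a constant $L\in(0,L_{\hat F}]$, $L_0=L$). For $k=0,1,\dots$: (1) choose $\tau_k,\varepsilon_k$; (2) compute $x_{k+1}$ with $\psi_{x_k,L_k,\tau_k}(x_{k+1})-\psi_{x_k,L_k,\tau_k}(T_{L_k,\tau_k}(x_k))\le\varepsilon_k$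 and $\hat f_1(x_k)\ge\psi_{x_k,L_k,\tau_k}(x_{k+1})$; (3) if $\hat f_1(x_{k+1})>\psi_{x_k,L_k,\tau_k}(x_{k+1})$, set $L_k:=\min\{2L_k,2L_{\hat F}\}$ and return to (1); (4) set $L_{k+1}=\max\{L_k/2,L\}$. *)

theory Defs
  imports "HOL-Analysis.Analysis"
begin

definition Fhat :: "(real^'n \<Rightarrow> real^'m) \<Rightarrow> real^'n \<Rightarrow> real^'m" where
  "Fhat F x = (1 / sqrt (real CARD('m))) *\<^sub>R F x"

definition Jac :: "(real^'n \<Rightarrow> real^'m) \<Rightarrow> real^'n \<Rightarrow> real^'n^'m" where
  "Jac F x = matrix (frechet_derivative (Fhat F) (at x))"

definition frob :: "real^'n^'m \<Rightarrow> real" where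
  "frob A = sqrt (\<Sum>i\<in>UNIV. \<Sum>j\<in>UNIV. (A $ i $ j)\<^sup>2)"

definition f1 :: "(real^'n \<Rightarrow> real^'m) \<Rightarrow> real^'n \<Rightarrow> real" where
  "f1 F x = norm (Fhat F x)"

definition f2 :: "(real^'n \<Rightarrow> real^'m) \<Rightarrow> real^'n \<Rightarrow> real" where
  "f2 F x = (f1 F x)\<^sup>2"

definition phi :: "(real^'n \<Rightarrow> real^'m) \<Rightarrow> real^'n \<Rightarrow> real^'n \<Rightarrow> real" where
  "phi F x y = norm (Fhat F x + Jac F x *v (y - x))"

definition psi :: "(real^'n \<Rightarrow> real^'m) \<Rightarrow> real \<Rightarrow> real \<Rightarrow> real^'n \<Rightarrow> real^'n \<Rightarrow> real" where
  "psi F L tau x y = tau / 2 + (phi F x y)\<^sup>2 / (2 * tau) + L / 2 * (norm (y - x))\<^sup>2"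

definition T :: "(real^'n \<Rightarrow> real^'m) \<Rightarrow> real \<Rightarrow> real \<Rightarrow> real^'n \<Rightarrow> real^'n" where
  "T F L tau x = arg_min (psi F L tau x) (\<lambda>_. True)"

definition Delta :: "(real^'n \<Rightarrow> real^'m) \<Rightarrow> real \<Rightarrow> real^'n \<Rightarrow> real" where
  "Delta F r x = f2 F x - (INF y\<in>cball x r. (phi F x y)\<^sup>2)"

definition kappa :: "real \<Rightarrow> real" where
  "kappa t = (if t \<le> 1 then t\<^sup>2 / 2 else t - 1 / 2)"

definition step2_ok :: "(real^'n \<Rightarrow> real^'m) \<Rightarrow> real \<Rightarrow> real \<Rightarrow> real \<Rightarrow> real^'n \<Rightarrow> real^'n \<Rightarrow> bool" where
  "step2_ok F L tau eps x y \<longleftrightarrow>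
     psi F L tau x y - psi F L tau x (T F L tau x) \<le> eps \<and> f1 F x \<ge> psi F L tau x y"

text \<open>Ls k is the value of L_k when iteration k starts (Ls 0 = L); the i-th trial of
  iteration k uses the constant obtained by applying  l \<mapsto> min (2l) (2 LF)  i times;
  trials i < j are rejected by the test of step (3), trial j is accepted and produces x_(k+1).\<close>
definition scheme1 :: "(real^'n \<Rightarrow> real^'m) \<Rightarrow> real \<Rightarrow> real \<Rightarrow> real \<Rightarrow> (nat \<Rightarrow> real^'n) \<Rightarrow> bool" where
  "scheme1 F L LF eps xs \<longleftrightarrow>
    (\<exists>Ls :: nat \<Rightarrow> real. Ls 0 = L \<and>
      (\<forall>k. 0 < f1 F (xs k) \<and>
        (\<exists>j::nat.
          (\<forall>i<j. \<exists>z. step2_ok F (((\<lambda>l. min (2 * l) (2 * LF)) ^^ i) (Ls k)) (f1 F (xs k)) eps (xs k) z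
                    \<and> f1 F z > psi F (((\<lambda>l. min (2 * l) (2 * LF)) ^^ i) (Ls k)) (f1 F (xs k)) (xs k) z) \<and>
          step2_ok F (((\<lambda>l. min (2 * l) (2 * LF)) ^^ j) (Ls k)) (f1 F (xs k)) eps (xs k) (xs (Suc k)) \<and>
          f1 F (xs (Suc k)) \<le> psi F (((\<lambda>l. min (2 * l) (2 * LF)) ^^ j) (Ls k)) (f1 F (xs k)) (xs k) (xs (Suc k)) \<and>
          Ls (Suc k) = max ((((\<lambda>l. min (2 * l) (2 * LF)) ^^ j) (Ls k)) / 2) L)))"

end

theory Submission
  imports Defs
begin

(* Every accepted iteration of Scheme 1 uses a constant L_k <= 2 L_F. Since psi is monotone in L
   and x_(k+1) is an eps-minimiser of the model, f1(x_(k+1)) <= psi_(x_k, 2 L_F, tau_k)(y) + eps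
   for every y. The model is (2 L_F)-strongly convex, so y = x_k bounds L_F ||T(x_k) - x_k||^2
   by the decrease f1(x_k) - f1(x_(k+1)) + eps, while y on the segment from x_k to a minimiser
   of phi^2 over the r-ball, with the step length optimised over [0,1], bounds the kappa term by
   the same decrease. Summing over k telescopes, and a minimum is at most the average. *)

lemma norm_convex_comb_power2:
  fixes u v :: "'a::real_inner"
  shows "(norm (t *\<^sub>R u + (1 - t) *\<^sub>R v))\<^sup>2
     = t * (norm u)\<^sup>2 + (1 - t) * (norm v)\<^sup>2 - t * (1 - t) * (norm (u - v))\<^sup>2"
  by (simp add: power2_norm_eq_inner inner_add_left inner_add_right inner_diff_left
      inner_diff_right inner_commute algebra_simps)

lemma phi_convex_comb_power2_le:
  assumes "0 \<le> t" "t \<le> 1"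
  shows "(phi F x (t *\<^sub>R y + (1 - t) *\<^sub>R z))\<^sup>2 \<le> t * (phi F x y)\<^sup>2 + (1 - t) * (phi F x z)\<^sup>2"
proof -
  let ?a = "\<lambda>v. Fhat F x + Jac F x *v (v - x)"
  have "?a (t *\<^sub>R y + (1 - t) *\<^sub>R z) = t *\<^sub>R ?a y + (1 - t) *\<^sub>R ?a z"
    by (simp add: matrix_vector_right_distrib matrix_vector_mult_diff_distrib
        matrix_vector_mult_scaleR algebra_simps)
  then show ?thesis
    unfolding phi_def using assms by (simp add: norm_convex_comb_power2)
qed

lemma psi_convex_comb_le:
  assumes "0 < tau" "0 \<le> t" "t \<le> 1"
  shows "psi F Lc tau x (t *\<^sub>R y + (1 - t) *\<^sub>R z)
     \<le> t * psi F Lc tau x y + (1 - t) * psi F Lc tau x z - Lc / 2 * t * (1 - t) * (norm (y - z))\<^sup>2"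
proof -
  define w where "w = t *\<^sub>R y + (1 - t) *\<^sub>R z"
  have "(phi F x w)\<^sup>2 / (2 * tau) \<le> (t * (phi F x y)\<^sup>2 + (1 - t) * (phi F x z)\<^sup>2) / (2 * tau)"
    unfolding w_def using assms by (intro divide_right_mono phi_convex_comb_power2_le) auto
  then have phi: "(phi F x w)\<^sup>2 / (2 * tau)
      \<le> t * ((phi F x y)\<^sup>2 / (2 * tau)) + (1 - t) * ((phi F x z)\<^sup>2 / (2 * tau))"
    by (simp add: add_divide_distrib)
  have "w - x = t *\<^sub>R (y - x) + (1 - t) *\<^sub>R (z - x)"
    unfolding w_def by (simp add: algebra_simps)
  then have dist: "(norm (w - x))\<^sup>2
      = t * (norm (y - x))\<^sup>2 + (1 - t) * (norm (z - x))\<^sup>2 - t * (1 - t) * (norm (y - z))\<^sup>2"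
    by (simp add: norm_convex_comb_power2)
  have "t * psi F Lc tau x y + (1 - t) * psi F Lc tau x z - Lc / 2 * t * (1 - t) * (norm (y - z))\<^sup>2
      = tau / 2 + (t * ((phi F x y)\<^sup>2 / (2 * tau)) + (1 - t) * ((phi F x z)\<^sup>2 / (2 * tau)))
        + Lc / 2 * (norm (w - x))\<^sup>2"
    using assms(1) unfolding psi_def dist by (simp add: field_simps)
  moreover have "psi F Lc tau x w = tau / 2 + (phi F x w)\<^sup>2 / (2 * tau) + Lc / 2 * (norm (w - x))\<^sup>2"
    by (simp add: psi_def)
  ultimately show ?thesis
    unfolding w_def[symmetric] using phi by linarith
qed

lemma psi_lower_bound:
  assumes "0 < tau" "0 \<le> Lc"
  shows "Lc / 2 * (norm (y - x))\<^sup>2 \<le> psi F Lc tau x y"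
  using assms unfolding psi_def by simp

lemma psi_self: "psi F Lc (f1 F x) x x = f1 F x"
  by (cases "f1 F x = 0") (simp_all add: psi_def phi_def f1_def power2_eq_square)

lemma continuous_on_psi: "0 < tau \<Longrightarrow> continuous_on S (psi F Lc tau x)"
  unfolding psi_def phi_def
  by (intro continuous_intros matrix_vector_mult_linear_continuous_on[THEN continuous_on_compose2])
    auto

(* Outside cball x R, psi_lower_bound already exceeds psi at x, so a minimiser over the ball
   is global. *)
lemma psi_has_minimizer:
  assumes "0 < Lc" "0 < tau"
  obtains z where "\<And>y. psi F Lc tau x z \<le> psi F Lc tau x y"
proof -
  let ?p = "psi F Lc tau x"
  define R where "R = sqrt (2 * ?p x / Lc)"
  have "0 \<le> ?p x" using psi_lower_bound[OF assms(2), of Lc x x F] assms(1) by simp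
  then have R: "0 \<le> R" "R\<^sup>2 = 2 * ?p x / Lc" unfolding R_def using assms(1) by simp_all
  have "continuous_on (cball x R) ?p" by (rule continuous_on_psi[OF assms(2)])
  then obtain z where z: "z \<in> cball x R" "\<And>w. w \<in> cball x R \<Longrightarrow> ?p z \<le> ?p w"
    using continuous_attains_inf[of "cball x R" ?p] R(1) by auto
  have "?p z \<le> ?p y" for y
  proof (cases "y \<in> cball x R")
    case False
    then have "R\<^sup>2 < (norm (y - x))\<^sup>2"
      using R(1) by (simp add: dist_norm norm_minus_commute power_strict_mono)
    then have "?p x < Lc / 2 * (norm (y - x))\<^sup>2" using R(2) assms(1) by (simp add: field_simps)
    also have "\<dots> \<le> ?p y" by (rule psi_lower_bound) (use assms in auto)
    finally have "?p x < ?p y" .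
    moreover have "?p z \<le> ?p x" using z(2)[of x] R(1) by simp
    ultimately show ?thesis by linarith
  qed (use z in blast)
  then show ?thesis by (rule that)
qed

lemma psi_T_le:
  assumes "0 < Lc" "0 < tau"
  shows "psi F Lc tau x (T F Lc tau x) \<le> psi F Lc tau x y"
proof -
  obtain z where "\<And>y. psi F Lc tau x z \<le> psi F Lc tau x y"
    using psi_has_minimizer[OF assms, where F = F and x = x] by blast
  then have "is_arg_min (psi F Lc tau x) (\<lambda>_. True) z"
    by (simp add: is_arg_min_def not_less)
  then have "is_arg_min (psi F Lc tau x) (\<lambda>_. True) (T F Lc tau x)"
    unfolding T_def arg_min_def by (rule someI)
  then show ?thesis by (simp add: is_arg_min_def not_less)
qed

(* Strong convexity: compare psi at T with psi on the segment from T to y and let the point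
   tend to T. *)
lemma psi_T_growth:
  assumes "0 < Lc" "0 < tau"
  shows "Lc / 2 * (norm (y - T F Lc tau x))\<^sup>2 \<le> psi F Lc tau x y - psi F Lc tau x (T F Lc tau x)"
proof (rule field_le_mult_one_interval)
  fix s :: real assume s: "0 < s" "s < 1"
  let ?p = "psi F Lc tau x" and ?z = "T F Lc tau x"
  have "?p ?z \<le> ?p ((1 - s) *\<^sub>R y + (1 - (1 - s)) *\<^sub>R ?z)" by (rule psi_T_le[OF assms])
  also have "\<dots> \<le> (1 - s) * ?p y + (1 - (1 - s)) * ?p ?z
      - Lc / 2 * (1 - s) * (1 - (1 - s)) * (norm (y - ?z))\<^sup>2"
    by (rule psi_convex_comb_le) (use s assms in auto)
  finally have "(1 - s) * (s * (Lc / 2 * (norm (y - ?z))\<^sup>2)) \<le> (1 - s) * (?p y - ?p ?z)"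
    by (simp add: algebra_simps)
  then show "s * (Lc / 2 * (norm (y - ?z))\<^sup>2) \<le> ?p y - ?p ?z"
    using s by simp
qed

(* c * kappa (s / c) is the maximum of t * s - c / 2 * t^2 over t in [0,1],
   attained at t = min 1 (s / c). *)
lemma mult_kappa_le:
  assumes "0 < c" "0 \<le> s" "\<And>t. 0 \<le> t \<Longrightarrow> t \<le> 1 \<Longrightarrow> t * s - c / 2 * t\<^sup>2 \<le> A"
  shows "c * kappa (s / c) \<le> A"
proof (cases "s / c \<le> 1")
  case True
  have "s / c * s - c / 2 * (s / c)\<^sup>2 \<le> A" by (rule assms(3)) (use True assms in auto)
  then show ?thesis
    using True assms(1) unfolding kappa_def by (simp add: field_simps power2_eq_square)
next
  case False
  have "1 * s - c / 2 * 1\<^sup>2 \<le> A" by (rule assms(3)) auto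
  moreover have "c * (s / c - 1 / 2) = s - c / 2" using assms(1) by (simp add: field_simps)
  ultimately show ?thesis using False unfolding kappa_def by simp
qed

lemma Delta_nonneg:
  assumes "0 \<le> r"
  shows "0 \<le> Delta F r x"
proof -
  have "(INF y\<in>cball x r. (phi F x y)\<^sup>2) \<le> (phi F x x)\<^sup>2"
    using assms by (intro cINF_lower bdd_belowI2[where m = 0]) auto
  then show ?thesis by (simp add: Delta_def f2_def phi_def f1_def)
qed

lemma Delta_attained:
  assumes "0 \<le> r"
  obtains y0 where "y0 \<in> cball x r" "Delta F r x = f2 F x - (phi F x y0)\<^sup>2"
proof -
  have "continuous_on (cball x r) (\<lambda>y. (phi F x y)\<^sup>2)"
    unfolding phi_def
    by (intro continuous_intros matrix_vector_mult_linear_continuous_on[THEN continuous_on_compose2])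
      auto
  then have "\<exists>y0\<in>cball x r. \<forall>y\<in>cball x r. (phi F x y0)\<^sup>2 \<le> (phi F x y)\<^sup>2"
    using assms by (intro continuous_attains_inf) auto
  then obtain y0 where y0: "y0 \<in> cball x r"
    and min: "\<And>y. y \<in> cball x r \<Longrightarrow> (phi F x y0)\<^sup>2 \<le> (phi F x y)\<^sup>2"
    by blast
  have "(INF y\<in>cball x r. (phi F x y)\<^sup>2) = (phi F x y0)\<^sup>2"
    using y0 min by (intro cInf_eq_minimum) auto
  then show ?thesis using that y0 unfolding Delta_def by simp
qed

lemma psi_le_Delta_decrease:
  assumes "0 < f1 F x" "0 \<le> r" "0 \<le> Lc" "0 \<le> t" "t \<le> 1"
  obtains y where
    "psi F Lc (f1 F x) x y \<le> f1 F x - t * (Delta F r x / (2 * f1 F x)) + Lc * r\<^sup>2 / 2 * t\<^sup>2"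
proof -
  let ?tau = "f1 F x"
  obtain y0 where y0: "y0 \<in> cball x r" "Delta F r x = f2 F x - (phi F x y0)\<^sup>2"
    using Delta_attained[OF assms(2)] .
  have "psi F Lc ?tau x (t *\<^sub>R y0 + (1 - t) *\<^sub>R x) \<le> t * psi F Lc ?tau x y0
      + (1 - t) * psi F Lc ?tau x x - Lc / 2 * t * (1 - t) * (norm (y0 - x))\<^sup>2"
    by (rule psi_convex_comb_le) (use assms in auto)
  also have "\<dots> = ?tau - t * (Delta F r x / (2 * ?tau)) + Lc / 2 * t\<^sup>2 * (norm (y0 - x))\<^sup>2"
    using assms(1)
    by (simp add: psi_self) (simp add: psi_def y0(2) f2_def field_simps power2_eq_square)
  also have "\<dots> \<le> ?tau - t * (Delta F r x / (2 * ?tau)) + Lc * r\<^sup>2 / 2 * t\<^sup>2"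
  proof -
    have "(norm (y0 - x))\<^sup>2 \<le> r\<^sup>2"
      using y0(1) by (simp add: dist_norm norm_minus_commute power_mono)
    then have "Lc / 2 * t\<^sup>2 * (norm (y0 - x))\<^sup>2 \<le> Lc / 2 * t\<^sup>2 * r\<^sup>2"
      using assms(3) by (intro mult_left_mono) auto
    then show ?thesis by (simp add: mult_ac)
  qed
  finally show ?thesis by (rule that)
qed

lemma T_step_le_decrease:
  assumes "0 < Lc" "0 < f1 F x" and descent: "\<And>y. f1 F x' \<le> psi F Lc (f1 F x) x y + eps"
  shows "Lc / 2 * (norm (T F Lc (f1 F x) x - x))\<^sup>2 \<le> f1 F x - f1 F x' + eps"
proof -
  let ?z = "T F Lc (f1 F x) x"
  have "Lc / 2 * (norm (x - ?z))\<^sup>2 \<le> psi F Lc (f1 F x) x x - psi F Lc (f1 F x) x ?z"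
    by (rule psi_T_growth[OF assms(1,2)])
  then show ?thesis using descent[of ?z] by (simp add: psi_self norm_minus_commute)
qed

lemma kappa_Delta_le_decrease:
  assumes "0 < Lc" "0 < f1 F x" "0 < r"
    and descent: "\<And>y. f1 F x' \<le> psi F Lc (f1 F x) x y + eps"
  shows "Lc * r\<^sup>2 * kappa (Delta F r x / (2 * f1 F x * Lc * r\<^sup>2)) \<le> f1 F x - f1 F x' + eps"
proof -
  have "Lc * r\<^sup>2 * kappa (Delta F r x / (2 * f1 F x) / (Lc * r\<^sup>2)) \<le> f1 F x - f1 F x' + eps"
  proof (rule mult_kappa_le)
    show "0 < Lc * r\<^sup>2" "0 \<le> Delta F r x / (2 * f1 F x)"
      using assms Delta_nonneg[of r F x] by simp_all
    fix t :: real assume "0 \<le> t" "t \<le> 1"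
    then obtain y where
      "psi F Lc (f1 F x) x y \<le> f1 F x - t * (Delta F r x / (2 * f1 F x)) + Lc * r\<^sup>2 / 2 * t\<^sup>2"
      using psi_le_Delta_decrease[of F x r Lc t] assms by auto
    then show "t * (Delta F r x / (2 * f1 F x)) - Lc * r\<^sup>2 / 2 * t\<^sup>2 \<le> f1 F x - f1 F x' + eps"
      using descent[of y] by linarith
  qed
  then show ?thesis by (simp add: mult.assoc)
qed

lemma Min_le_telescoping_average:
  fixes v d :: "nat \<Rightarrow> real"
  assumes "0 < k" "\<And>i. i < k \<Longrightarrow> v i \<le> C * (d i - d (Suc i) + e)"
  shows "Min (v ` {..<k}) \<le> C * (e + (d 0 - d k) / real k)"
proof -
  have "real k * Min (v ` {..<k}) = (\<Sum>i<k. Min (v ` {..<k}))" by simp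
  also have "\<dots> \<le> (\<Sum>i<k. C * (d i - d (Suc i) + e))"
    using assms(2)
    by (intro sum_mono) (meson Min_le finite_imageI finite_lessThan image_eqI lessThan_iff order_trans)
  also have "\<dots> = C * (d 0 - d k + real k * e)"
    by (simp add: sum_distrib_left[symmetric] sum.distrib sum_lessThan_telescope')
  finally show ?thesis using assms(1) by (simp add: field_simps)
qed

lemma capped_doubling_iter_bounds:
  fixes l LF :: real
  assumes "0 < l" "l \<le> 2 * LF"
  shows "0 < ((\<lambda>l. min (2 * l) (2 * LF)) ^^ j) l \<and> ((\<lambda>l. min (2 * l) (2 * LF)) ^^ j) l \<le> 2 * LF"
  using assms by (induction j) auto

lemma accepted_step_descent:
  assumes "0 < Lc" "Lc \<le> L'" "0 < f1 F x"
    and "step2_ok F Lc (f1 F x) eps x x'" "f1 F x' \<le> psi F Lc (f1 F x) x x'"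
  shows "f1 F x' \<le> psi F L' (f1 F x) x y + eps"
proof -
  have "f1 F x' \<le> psi F Lc (f1 F x) x (T F Lc (f1 F x) x) + eps"
    using assms(4,5) unfolding step2_ok_def by linarith
  also have "\<dots> \<le> psi F Lc (f1 F x) x y + eps"
    using psi_T_le[OF assms(1,3)] by simp
  also have "\<dots> \<le> psi F L' (f1 F x) x y + eps"
    using assms(2) by (simp add: psi_def mult_right_mono)
  finally show ?thesis .
qed

lemma scheme1_descent:
  assumes "scheme1 F L LF eps xs" "0 < L" "L \<le> LF"
  shows "0 < f1 F (xs k)" "f1 F (xs (Suc k)) \<le> psi F (2 * LF) (f1 F (xs k)) (xs k) y + eps"
proof -
  let ?g = "\<lambda>l::real. min (2 * l) (2 * LF)"
  obtain Ls :: "nat \<Rightarrow> real" where Ls0: "Ls 0 = L"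
    and pos: "\<And>k. 0 < f1 F (xs k)"
    and accepted: "\<And>k. \<exists>j. step2_ok F ((?g ^^ j) (Ls k)) (f1 F (xs k)) eps (xs k) (xs (Suc k))
          \<and> f1 F (xs (Suc k)) \<le> psi F ((?g ^^ j) (Ls k)) (f1 F (xs k)) (xs k) (xs (Suc k))
          \<and> Ls (Suc k) = max ((?g ^^ j) (Ls k) / 2) L"
    using assms(1) unfolding scheme1_def by blast
  have Ls: "0 < Ls k \<and> Ls k \<le> LF" for k
  proof (induction k)
    case (Suc k)
    obtain j where "Ls (Suc k) = max ((?g ^^ j) (Ls k) / 2) L" using accepted by blast
    then show ?case using capped_doubling_iter_bounds[of "Ls k" LF j] Suc assms(2,3) by auto
  qed (use Ls0 assms(2,3) in simp)
  show "0 < f1 F (xs k)" by (rule pos)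
  obtain j where "step2_ok F ((?g ^^ j) (Ls k)) (f1 F (xs k)) eps (xs k) (xs (Suc k))"
    and "f1 F (xs (Suc k)) \<le> psi F ((?g ^^ j) (Ls k)) (f1 F (xs k)) (xs k) (xs (Suc k))"
    using accepted by blast
  then show "f1 F (xs (Suc k)) \<le> psi F (2 * LF) (f1 F (xs k)) (xs k) y + eps"
    using capped_doubling_iter_bounds[of "Ls k" LF j] Ls[of k] pos
    by (intro accepted_step_descent) auto
qed

lemma T_step_bound:
  assumes "0 < L" "L \<le> LF" "0 < f1 F x"
    and descent: "\<And>y. f1 F x' \<le> psi F (2 * LF) (f1 F x) x y + eps"
  shows "(norm ((2 * LF) *\<^sub>R (T F (2 * LF) (f1 F x) x - x)))\<^sup>2
    \<le> 8 * LF\<^sup>2 / L * (f1 F x - f1 F x' + eps)"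
proof -
  let ?n = "norm (T F (2 * LF) (f1 F x) x - x)" and ?D = "f1 F x - f1 F x' + eps"
  have LF: "0 < LF" using assms(1,2) by linarith
  have step: "2 * LF / 2 * ?n\<^sup>2 \<le> ?D"
    using LF assms(3) descent by (intro T_step_le_decrease) auto
  have "(norm ((2 * LF) *\<^sub>R (T F (2 * LF) (f1 F x) x - x)))\<^sup>2
      = 4 * LF * (2 * LF / 2 * ?n\<^sup>2)"
    using LF by (simp add: power_mult_distrib power2_eq_square)
  also have "\<dots> \<le> 4 * LF * ?D" using step LF by simp
  also have "\<dots> \<le> 8 * LF\<^sup>2 / L * ?D"
  proof (rule mult_right_mono)
    show "4 * LF \<le> 8 * LF\<^sup>2 / L" using assms(1,2) LF by (simp add: field_simps power2_eq_square)
    have "0 \<le> 2 * LF / 2 * ?n\<^sup>2" using LF by simp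
    then show "0 \<le> ?D" using step by linarith
  qed
  finally show ?thesis .
qed

lemma kappa_Delta_bound:
  assumes "0 < LF" "0 < f1 F x" "0 < r"
    and descent: "\<And>y. f1 F x' \<le> psi F (2 * LF) (f1 F x) x y + eps"
  shows "2 * (LF * r)\<^sup>2 * kappa (Delta F r x / (4 * f1 F x * LF * r\<^sup>2))
    \<le> LF * (f1 F x - f1 F x' + eps)"
proof -
  have "2 * LF * r\<^sup>2 * kappa (Delta F r x / (2 * f1 F x * (2 * LF) * r\<^sup>2))
      \<le> f1 F x - f1 F x' + eps"
    using assms by (intro kappa_Delta_le_decrease) auto
  then have "LF * (2 * LF * r\<^sup>2 * kappa (Delta F r x / (2 * f1 F x * (2 * LF) * r\<^sup>2)))
      \<le> LF * (f1 F x - f1 F x' + eps)"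
    using assms(1) by simp
  moreover have "2 * f1 F x * (2 * LF) * r\<^sup>2 = 4 * f1 F x * LF * r\<^sup>2" by simp
  ultimately show ?thesis by (simp add: power_mult_distrib power2_eq_square algebra_simps)
qed

theorem theorem1:
  fixes F :: "real^'n \<Rightarrow> real^'m" and FF :: "(real^'n) set"
    and L LF eps r :: real and xs :: "nat \<Rightarrow> real^'n" and k :: nat
  assumes "closed FF" and "convex FF" and "interior FF \<noteq> {}"
    and "\<forall>x. F differentiable (at x)"
    and "\<forall>x\<in>FF. \<forall>y\<in>FF. frob (Jac F y - Jac F x) \<le> LF * norm (y - x)"
    and "0 < L" and "L \<le> LF" and "0 \<le> eps"
    and "{x. f1 F x \<le> f1 F (xs 0)} \<subseteq> FF"
    and "\<forall>i. xs i \<in> FF"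
    and "scheme1 F L LF eps xs"
    and "0 < k" and "0 < r"
  shows "(8 * LF\<^sup>2 / L * (eps + (f1 F (xs 0) - f1 F (xs k)) / real k)
           \<ge> Min ((\<lambda>i. (norm ((2 * LF) *\<^sub>R (T F (2 * LF) (f1 F (xs i)) (xs i) - xs i)))\<^sup>2) ` {..<k})) \<and>
         (LF * (eps + (f1 F (xs 0) - f1 F (xs k)) / real k)
           \<ge> Min ((\<lambda>i. 2 * (LF * r)\<^sup>2 * kappa (Delta F r (xs i) / (4 * f1 F (xs i) * LF * r\<^sup>2))) ` {..<k}))"
proof -
  have LF: "0 < LF" using assms(6,7) by linarith
  note pos = scheme1_descent(1)[OF assms(11,6,7)]
  note descent = scheme1_descent(2)[OF assms(11,6,7)]
  show ?thesis
    using T_step_bound[OF assms(6,7) pos descent] kappa_Delta_bound[OF LF pos assms(13) descent]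
    by (intro conjI Min_le_telescoping_average[OF assms(12), where d = "\<lambda>i. f1 F (xs i)"]) auto
qed

end
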